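(* Let $\mathcal{A}$ be a line arrangement in $\mathbb{P}^2_{\mathbb{C}}$ which is not of class $\mathcal{C}_{\le 3}$ of simple type. Then there exist six distinct lines $H_1,\dots,H_6\in\mathcal{A}$ such that $H_1\cap H_2\cap H_3\ne\emptyset$, $H_4\cap H_5\cap H_6\ne\emptyset$, and $(H_1\cup H_2\cup H_3)\cap(H_4\cup H_5\cup H_6)$ consists of exactly $9$ points.
   Context: $\operatorname{mult}(\mathcal{A})$ is the set of points on at least three lines of $\mathcal{A}$. $\mathcal{A}$ is of type $\mathcal{C}_k$ if $k$ is the minimal number of lines of $\mathcal{A}$ whose union contains $\operatorname{mult}(\mathcal{A})$. "$\mathcal{C}_{\le 3}$ of simple type" means of type $\mathcal{C}_0,\mathcal{C}_1,\mathcal{C}_2$, or of type $\mathcal{C}_3$ such that there exist $H_1,H_2,H_3\in\mathcal{A}$ with $\operatorname{mult}(\mathcal{A})\subset H_1\cup H_2\cup H_3$ and either (i) $H_1\cap H_2\cap H_3=\emptyset$ and exactly one multiple point lies on $H_1\setminus(H_2\cup H_3)$, or (ii) $H_1\cap H_2\cap H_3\ne\emptyset$. *)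

theory Defs
  imports "HOL-Analysis.Analysis"
begin

text \<open>Points of the complex projective plane: the complex lines through the
origin in C^3, i.e. sets of all complex multiples of a nonzero vector.\<close>

type_synonym ppoint = "(complex^3) set"

definition proj_pt :: "complex^3 \<Rightarrow> ppoint" where
  "proj_pt v = {c *s v | c. True}"

definition proj_points :: "ppoint set" where
  "proj_points = {proj_pt v | v. v \<noteq> 0}"

definition proj_line :: "complex^3 \<Rightarrow> ppoint set" where
  "proj_line a = {P \<in> proj_points. \<forall>x\<in>P. (\<Sum>i\<in>UNIV. a $ i * x $ i) = 0}"

definition is_line :: "ppoint set \<Rightarrow> bool" where
  "is_line L \<longleftrightarrow> (\<exists>a. a \<noteq> 0 \<and> L = proj_line a)"

definition line_arrangement :: "ppoint set set \<Rightarrow> bool" where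
  "line_arrangement A \<longleftrightarrow> finite A \<and> (\<forall>H\<in>A. is_line H)"

definition mult :: "ppoint set set \<Rightarrow> ppoint set" where
  "mult A = {P \<in> proj_points. 3 \<le> card {H \<in> A. P \<in> H}}"

definition cover_num :: "ppoint set set \<Rightarrow> nat" where
  "cover_num A = (LEAST k. \<exists>S \<subseteq> A. card S = k \<and> mult A \<subseteq> \<Union>S)"

definition of_type_C :: "nat \<Rightarrow> ppoint set set \<Rightarrow> bool" where
  "of_type_C k A \<longleftrightarrow> cover_num A = k"

definition C_le3_simple :: "ppoint set set \<Rightarrow> bool" where
  "C_le3_simple A \<longleftrightarrow>
     of_type_C 0 A \<or> of_type_C 1 A \<or> of_type_C 2 A \<or>
     (of_type_C 3 A \<and>
       (\<exists>H1\<in>A. \<exists>H2\<in>A. \<exists>H3\<in>A. mult A \<subseteq> H1 \<union> H2 \<union> H3 \<and>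
          ((H1 \<inter> H2 \<inter> H3 = {} \<and> card {P \<in> mult A. P \<in> H1 - (H2 \<union> H3)} = 1)
           \<or> H1 \<inter> H2 \<inter> H3 \<noteq> {})))"

end

theory Submission
  imports Defs
begin

(*
  Call P, Q well separated in A if at least three lines of A pass through P but not Q, and
  at least three through Q but not P.  Choosing lines H1, H2, H3 through P and H4, H5, H6
  through Q, each Hi (i \<le> 3) meets each Hj (j \<ge> 4) in exactly one point, and these nine
  points are distinct: a coincidence would force the common point to be P or Q.

  Conversely, an arrangement without well separated points is of class C_{\<le>3} of simple
  type.  If a multiple point P lies on exactly three lines, these concurrent lines cover
  mult A (a multiple point off them would be well separated from P).  Otherwise every
  multiple point lies on at least four lines, and since two points share at most one line,
  two distinct multiple points would be well separated; so mult A has at most one point.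
*)

definition pairing :: "complex^3 \<Rightarrow> complex^3 \<Rightarrow> complex" where
  "pairing a x = (\<Sum>i\<in>UNIV. a $ i * x $ i)"

text \<open>The cross product; over the complex numbers it still yields a vector incident to both
  arguments and vanishes exactly on proportional pairs.\<close>

definition ccross :: "complex^3 \<Rightarrow> complex^3 \<Rightarrow> complex^3" where
  "ccross a b = vector [a$2*b$3 - a$3*b$2, a$3*b$1 - a$1*b$3, a$1*b$2 - a$2*b$1]"

lemma pairing_expand: "pairing a x = a$1*x$1 + a$2*x$2 + a$3*x$3"
  by (simp add: pairing_def sum_3)

lemma ccross_nth:
  "ccross a b $ 1 = a$2*b$3 - a$3*b$2"
  "ccross a b $ 2 = a$3*b$1 - a$1*b$3"
  "ccross a b $ 3 = a$1*b$2 - a$2*b$1"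
  by (simp_all add: ccross_def)

lemma vec3_eq_iff: "(v::complex^3) = w \<longleftrightarrow> v$1 = w$1 \<and> v$2 = w$2 \<and> v$3 = w$3"
  by (simp add: vec_eq_iff forall_3)

lemma pairing_scale: "pairing a (c *s x) = c * pairing a x" "pairing (c *s a) x = c * pairing a x"
  by (simp_all add: pairing_expand algebra_simps)

lemma pairing_ccross: "pairing a (ccross a b) = 0" "pairing b (ccross a b) = 0"
  by (simp_all add: pairing_expand ccross_nth algebra_simps)

lemma ccross_ccross: "ccross (ccross v w) a = pairing a v *s w - pairing a w *s v"
  by (simp add: vec3_eq_iff ccross_nth pairing_expand algebra_simps)

lemma ccross_eq_0_imp_proportional:
  assumes "a \<noteq> 0" "ccross a b = 0" shows "\<exists>c. b = c *s a"
proof -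
  have e: "a$2*b$3 = a$3*b$2" "a$3*b$1 = a$1*b$3" "a$1*b$2 = a$2*b$1"
    using assms(2) unfolding vec3_eq_iff ccross_nth by auto
  consider "a$1 \<noteq> 0" | "a$2 \<noteq> 0" | "a$3 \<noteq> 0" using assms(1) vec3_eq_iff by auto
  then show ?thesis
  proof cases
    case 1
    then have "b = (b$1/a$1) *s a" unfolding vec3_eq_iff using e by (auto simp: field_simps)
    then show ?thesis by blast
  next
    case 2
    then have "b = (b$2/a$2) *s a" unfolding vec3_eq_iff using e by (auto simp: field_simps)
    then show ?thesis by blast
  next
    case 3
    then have "b = (b$3/a$3) *s a" unfolding vec3_eq_iff using e by (auto simp: field_simps)
    then show ?thesis by blast
  qed
qed

lemma mem_proj_pt: "v \<in> proj_pt v"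
  unfolding proj_pt_def by (auto intro: exI[of _ 1])

lemma proj_pt_mem_proj_line_iff:
  assumes "v \<noteq> 0" shows "proj_pt v \<in> proj_line a \<longleftrightarrow> pairing a v = 0"
proof -
  have "proj_pt v \<in> proj_points" using assms unfolding proj_points_def by blast
  moreover have "(\<forall>x\<in>proj_pt v. pairing a x = 0) \<longleftrightarrow> pairing a v = 0"
    using mem_proj_pt[of v] by (auto simp: proj_pt_def pairing_scale)
  ultimately show ?thesis unfolding proj_line_def pairing_def[symmetric] by auto
qed

lemma proj_pt_scale: assumes "c \<noteq> 0" shows "proj_pt (c *s v) = proj_pt v"
proof -
  have "d *s v \<in> proj_pt (c *s v)" for d
    unfolding proj_pt_def using assms by (auto intro!: exI[of _ "d/c"])
  moreover have "d *s (c *s v) \<in> proj_pt v" for d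
    unfolding proj_pt_def by (auto intro!: exI[of _ "d*c"])
  ultimately show ?thesis unfolding proj_pt_def by blast
qed

lemma proj_line_scale: assumes "c \<noteq> 0" shows "proj_line (c *s a) = proj_line a"
  using assms unfolding proj_line_def pairing_def[symmetric] by (auto simp: pairing_scale)

lemma point_on_line_coords:
  assumes "P \<in> proj_line a" obtains v where "v \<noteq> 0" "P = proj_pt v"
  using assms unfolding proj_line_def proj_points_def by blast

lemma proj_line_eq_if_ccross_0:
  assumes "a \<noteq> 0" "b \<noteq> 0" "ccross a b = 0" shows "proj_line b = proj_line a"
proof -
  obtain c where c: "b = c *s a" using ccross_eq_0_imp_proportional assms(1,3) by blast
  with assms(2) have "c \<noteq> 0" by auto
  then show ?thesis using c proj_line_scale by simp
qed

text \<open>Two distinct points lie on at most one line: the line through [v] and [w] has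
  coordinates v \<times> w.\<close>

lemma line_through_two_points_unique:
  assumes "is_line L1" "is_line L2" "P \<in> L1" "P \<in> L2" "Q \<in> L1" "Q \<in> L2" "P \<noteq> Q"
  shows "L1 = L2"
proof -
  obtain a where a: "a \<noteq> 0" "L1 = proj_line a" using assms(1) is_line_def by blast
  obtain b where b: "b \<noteq> 0" "L2 = proj_line b" using assms(2) is_line_def by blast
  obtain v where v: "v \<noteq> 0" "P = proj_pt v" using assms(3) a point_on_line_coords by blast
  obtain w where w: "w \<noteq> 0" "Q = proj_pt w" using assms(5) a point_on_line_coords by blast
  have incid: "pairing a v = 0" "pairing a w = 0" "pairing b v = 0" "pairing b w = 0"
    using assms a b v w proj_pt_mem_proj_line_iff by auto
  have vw: "ccross v w \<noteq> 0"
  proof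
    assume "ccross v w = 0"
    then obtain c where c: "w = c *s v" using ccross_eq_0_imp_proportional v by blast
    with w have "c \<noteq> 0" by auto
    then have "Q = P" using c v w proj_pt_scale by simp
    with assms(7) show False by simp
  qed
  have "proj_line a = proj_line (ccross v w)" "proj_line b = proj_line (ccross v w)"
    using proj_line_eq_if_ccross_0[OF vw] a b incid by (simp_all add: ccross_ccross)
  then show ?thesis using a b by simp
qed

text \<open>Two distinct lines meet in exactly one point, with coordinates a \<times> b.\<close>

lemma distinct_lines_meet_in_one_point:
  assumes "is_line L1" "is_line L2" "L1 \<noteq> L2" shows "\<exists>r. L1 \<inter> L2 = {r}"
proof -
  obtain a where a: "a \<noteq> 0" "L1 = proj_line a" using assms(1) is_line_def by blast
  obtain b where b: "b \<noteq> 0" "L2 = proj_line b" using assms(2) is_line_def by blast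
  have "ccross a b \<noteq> 0" using proj_line_eq_if_ccross_0 a b assms(3) by metis
  then have "proj_pt (ccross a b) \<in> L1 \<inter> L2"
    using proj_pt_mem_proj_line_iff pairing_ccross a b by simp
  then show ?thesis using line_through_two_points_unique[OF assms(1,2)] assms(3) by blast
qed

lemma pencils_intersection_card:
  assumes X: "\<forall>H\<in>X. is_line H \<and> P \<in> H \<and> Q \<notin> H"
    and Y: "\<forall>K\<in>Y. is_line K \<and> Q \<in> K \<and> P \<notin> K"
    and fin: "finite X" "finite Y"
  shows "finite (\<Union>X \<inter> \<Union>Y) \<and> card (\<Union>X \<inter> \<Union>Y) = card X * card Y"
proof -
  define meet where "meet = (\<lambda>(H::ppoint set, K). the_elem (H \<inter> K))"
  have meet: "H \<inter> K = {meet (H, K)}" if "H \<in> X" "K \<in> Y" for H K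
  proof -
    have lines: "is_line H" "is_line K" and "P \<in> H" "P \<notin> K" using X Y that by simp_all
    then have "H \<noteq> K" by blast
    then obtain r where "H \<inter> K = {r}" using distinct_lines_meet_in_one_point[OF lines] by blast
    then show ?thesis unfolding meet_def by simp
  qed
  have image: "\<Union>X \<inter> \<Union>Y = meet ` (X \<times> Y)"
  proof
    show "\<Union>X \<inter> \<Union>Y \<subseteq> meet ` (X \<times> Y)"
    proof
      fix r assume "r \<in> \<Union>X \<inter> \<Union>Y"
      then obtain H K where HK: "H \<in> X" "K \<in> Y" "r \<in> H \<inter> K" by blast
      then have "r = meet (H, K)" using meet[OF HK(1,2)] by simp
      with HK show "r \<in> meet ` (X \<times> Y)" by blast
    qed
    show "meet ` (X \<times> Y) \<subseteq> \<Union>X \<inter> \<Union>Y"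
    proof clarify
      fix H K assume "H \<in> X" "K \<in> Y"
      with meet[OF this] show "meet (H, K) \<in> \<Union>X \<inter> \<Union>Y" by blast
    qed
  qed
  have "inj_on meet (X \<times> Y)"
  proof (rule inj_onI, clarify)
    fix H K H' K' assume HK: "H \<in> X" "K \<in> Y" "H' \<in> X" "K' \<in> Y" "meet (H, K) = meet (H', K')"
    define r where "r = meet (H, K)"
    have r: "r \<in> H" "r \<in> K" "r \<in> H'" "r \<in> K'"
      using meet[OF HK(1,2)] meet[OF HK(3,4)] HK(5) unfolding r_def by auto
    have "r \<noteq> P" "r \<noteq> Q" using r X Y HK by auto
    have "H = H'"
      by (rule line_through_two_points_unique[of H H' r P]) (use r X HK \<open>r \<noteq> P\<close> in auto)
    moreover have "K = K'"
      by (rule line_through_two_points_unique[of K K' r Q]) (use r Y HK \<open>r \<noteq> Q\<close> in auto)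
    ultimately show "H = H' \<and> K = K'" ..
  qed
  then have "card (meet ` (X \<times> Y)) = card X * card Y"
    by (simp add: card_image card_cartesian_product)
  then show ?thesis unfolding image using fin by simp
qed

definition well_separated :: "ppoint set set \<Rightarrow> ppoint \<Rightarrow> ppoint \<Rightarrow> bool" where
  "well_separated A P Q \<longleftrightarrow>
     3 \<le> card {H\<in>A. P \<in> H \<and> Q \<notin> H} \<and> 3 \<le> card {H\<in>A. Q \<in> H \<and> P \<notin> H}"

lemma three_distinct_elements:
  assumes "3 \<le> card S" obtains x y z where "x \<in> S" "y \<in> S" "z \<in> S" "distinct [x, y, z]"
proof -
  obtain T where "T \<subseteq> S" "card T = 3" using obtain_subset_with_card_n[OF assms] by metis
  then show ?thesis using that unfolding card_3_iff by auto
qed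

lemma well_separated_nine_points:
  assumes "line_arrangement A" "well_separated A P Q"
  shows "\<exists>H1\<in>A. \<exists>H2\<in>A. \<exists>H3\<in>A. \<exists>H4\<in>A. \<exists>H5\<in>A. \<exists>H6\<in>A.
           distinct [H1, H2, H3, H4, H5, H6] \<and>
           H1 \<inter> H2 \<inter> H3 \<noteq> {} \<and> H4 \<inter> H5 \<inter> H6 \<noteq> {} \<and>
           finite ((H1 \<union> H2 \<union> H3) \<inter> (H4 \<union> H5 \<union> H6)) \<and>
           card ((H1 \<union> H2 \<union> H3) \<inter> (H4 \<union> H5 \<union> H6)) = 9"
proof -
  have "3 \<le> card {H\<in>A. P \<in> H \<and> Q \<notin> H}" "3 \<le> card {H\<in>A. Q \<in> H \<and> P \<notin> H}"
    using assms(2) unfolding well_separated_def by auto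
  obtain H1 H2 H3 where H: "H1 \<in> {H\<in>A. P \<in> H \<and> Q \<notin> H}" "H2 \<in> {H\<in>A. P \<in> H \<and> Q \<notin> H}"
    "H3 \<in> {H\<in>A. P \<in> H \<and> Q \<notin> H}" "distinct [H1, H2, H3]"
    using \<open>3 \<le> card {H\<in>A. P \<in> H \<and> Q \<notin> H}\<close> by (rule three_distinct_elements)
  obtain H4 H5 H6 where K: "H4 \<in> {H\<in>A. Q \<in> H \<and> P \<notin> H}" "H5 \<in> {H\<in>A. Q \<in> H \<and> P \<notin> H}"
    "H6 \<in> {H\<in>A. Q \<in> H \<and> P \<notin> H}" "distinct [H4, H5, H6]"
    using \<open>3 \<le> card {H\<in>A. Q \<in> H \<and> P \<notin> H}\<close> by (rule three_distinct_elements)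
  have "\<forall>H\<in>A. is_line H" using assms(1) line_arrangement_def by blast
  then have "finite (\<Union>{H1,H2,H3} \<inter> \<Union>{H4,H5,H6}) \<and>
      card (\<Union>{H1,H2,H3} \<inter> \<Union>{H4,H5,H6}) = card {H1,H2,H3} * card {H4,H5,H6}"
    using H K by (intro pencils_intersection_card[of _ P Q]) auto
  moreover have "card {H1,H2,H3} = 3" "card {H4,H5,H6} = 3" using H(4) K(4) by auto
  ultimately have nine: "finite ((H1 \<union> H2 \<union> H3) \<inter> (H4 \<union> H5 \<union> H6))"
      "card ((H1 \<union> H2 \<union> H3) \<inter> (H4 \<union> H5 \<union> H6)) = 9"
    by (simp_all add: Un_assoc)
  have shape: "distinct [H1, H2, H3, H4, H5, H6]" "H1 \<inter> H2 \<inter> H3 \<noteq> {}" "H4 \<inter> H5 \<inter> H6 \<noteq> {}"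
    using H K by auto
  have members: "H1 \<in> A" "H2 \<in> A" "H3 \<in> A" "H4 \<in> A" "H5 \<in> A" "H6 \<in> A" using H K by auto
  show ?thesis
    by (rule bexI[where x = H1], rule bexI[where x = H2], rule bexI[where x = H3],
        rule bexI[where x = H4], rule bexI[where x = H5], rule bexI[where x = H6])
      (simp_all only: nine shape members simp_thms)
qed

lemma cover_num_le_card:
  assumes "S \<subseteq> A" "mult A \<subseteq> \<Union>S" shows "cover_num A \<le> card S"
  unfolding cover_num_def by (rule Least_le) (use assms in blast)

lemma C_le3_simple_if_cover_num_le_2: "cover_num A \<le> 2 \<Longrightarrow> C_le3_simple A"
  unfolding C_le3_simple_def of_type_C_def by arith

text \<open>Two distinct points share at most one line of A, so removing the lines through Q
  loses at most one line through P.\<close>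

lemma card_lines_through_le:
  assumes "line_arrangement A" "P \<noteq> Q"
  shows "card {H\<in>A. P \<in> H} \<le> card {H\<in>A. P \<in> H \<and> Q \<notin> H} + 1"
proof -
  have fin: "finite A" and lines: "\<forall>H\<in>A. is_line H"
    using assms(1) unfolding line_arrangement_def by auto
  have "\<forall>H1\<in>{H\<in>A. P \<in> H \<and> Q \<in> H}. \<forall>H2\<in>{H\<in>A. P \<in> H \<and> Q \<in> H}. H1 = H2"
  proof (intro ballI)
    fix H1 H2 assume H: "H1 \<in> {H\<in>A. P \<in> H \<and> Q \<in> H}" "H2 \<in> {H\<in>A. P \<in> H \<and> Q \<in> H}"
    show "H1 = H2"
      by (rule line_through_two_points_unique[OF _ _ _ _ _ _ assms(2)]) (use H lines in auto)
  qed
  then have at_most_one: "card {H\<in>A. P \<in> H \<and> Q \<in> H} \<le> 1"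
    using fin by (simp add: card_le_Suc0_iff_eq)
  have split: "{H\<in>A. P \<in> H} = {H\<in>A. P \<in> H \<and> Q \<notin> H} \<union> {H\<in>A. P \<in> H \<and> Q \<in> H}"
    by auto
  have "card {H\<in>A. P \<in> H} \<le> card {H\<in>A. P \<in> H \<and> Q \<notin> H} + card {H\<in>A. P \<in> H \<and> Q \<in> H}"
    unfolding split by (rule card_Un_le)
  with at_most_one show ?thesis by linarith
qed

lemma C_le3_simple_if_triple_point:
  assumes "\<forall>P Q. \<not> well_separated A P Q"
    and P: "P \<in> mult A" "card {H\<in>A. P \<in> H} = 3"
  shows "C_le3_simple A"
proof -
  define T where "T = {H\<in>A. P \<in> H}"
  obtain H1 H2 H3 where T: "T = {H1, H2, H3}"
    using P(2) unfolding T_def[symmetric] card_3_iff by blast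
  have on_P: "P \<in> H1 \<inter> H2 \<inter> H3" "H1 \<in> A" "H2 \<in> A" "H3 \<in> A"
    using T unfolding T_def by blast+
  have cover: "mult A \<subseteq> \<Union>T"
  proof
    fix Q assume Q: "Q \<in> mult A"
    show "Q \<in> \<Union>T"
    proof (rule ccontr)
      assume "Q \<notin> \<Union>T"
      then have "{H\<in>A. P \<in> H \<and> Q \<notin> H} = T" "{H\<in>A. Q \<in> H \<and> P \<notin> H} = {H\<in>A. Q \<in> H}"
        unfolding T_def by blast+
      then have "well_separated A P Q"
        using P(2) Q unfolding well_separated_def T_def mult_def by simp
      with assms(1) show False by blast
    qed
  qed
  then have le3: "cover_num A \<le> 3"
    using cover_num_le_card[of T A] P(2) unfolding T_def by auto
  have concurrent:
    "\<exists>H1\<in>A. \<exists>H2\<in>A. \<exists>H3\<in>A. mult A \<subseteq> H1 \<union> H2 \<union> H3 \<and> H1 \<inter> H2 \<inter> H3 \<noteq> {}"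
    using on_P cover T by blast
  show ?thesis
  proof (cases "cover_num A \<le> 2")
    case False
    with le3 have "of_type_C 3 A" unfolding of_type_C_def by simp
    with concurrent show ?thesis unfolding C_le3_simple_def by blast
  qed (rule C_le3_simple_if_cover_num_le_2)
qed

lemma C_le3_simple_if_no_well_separated:
  assumes A: "line_arrangement A" and no_sep: "\<forall>P Q. \<not> well_separated A P Q"
  shows "C_le3_simple A"
proof -
  have at_least_3: "3 \<le> card {H\<in>A. P \<in> H}" if "P \<in> mult A" for P
    using that unfolding mult_def by simp
  show ?thesis
  proof (cases "\<exists>P\<in>mult A. card {H\<in>A. P \<in> H} = 3")
    case True
    then show ?thesis using C_le3_simple_if_triple_point no_sep by blast
  next
    case no_triple: False
    show ?thesis
    proof (cases "\<exists>P Q. P \<in> mult A \<and> Q \<in> mult A \<and> P \<noteq> Q")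
      case True
      then obtain P Q where PQ: "P \<in> mult A" "Q \<in> mult A" "P \<noteq> Q" by blast
      have "card {H\<in>A. P \<in> H} \<noteq> 3" "card {H\<in>A. Q \<in> H} \<noteq> 3"
        using no_triple PQ by auto
      then have "4 \<le> card {H\<in>A. P \<in> H}" "4 \<le> card {H\<in>A. Q \<in> H}"
        using at_least_3[OF PQ(1)] at_least_3[OF PQ(2)] by linarith+
      moreover have "card {H\<in>A. P \<in> H} \<le> card {H\<in>A. P \<in> H \<and> Q \<notin> H} + 1"
        "card {H\<in>A. Q \<in> H} \<le> card {H\<in>A. Q \<in> H \<and> P \<notin> H} + 1"
        using card_lines_through_le[OF A] PQ(3) by auto
      ultimately have "well_separated A P Q" unfolding well_separated_def by linarith
      with no_sep show ?thesis by blast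
    next
      case False
      text \<open>At most one multiple point: one line through it (or none) covers mult A.\<close>
      have "cover_num A \<le> 1"
      proof (cases "mult A = {}")
        case True
        then show ?thesis using cover_num_le_card[of "{}" A] by simp
      next
        case False
        then obtain P where P: "P \<in> mult A" by blast
        then have "{H\<in>A. P \<in> H} \<noteq> {}" using at_least_3 by (metis card.empty not_numeral_le_zero)
        then obtain H where "H \<in> A" "P \<in> H" by blast
        moreover have "mult A \<subseteq> {P}" using P \<open>\<not> (\<exists>P Q. _)\<close> by blast
        ultimately show ?thesis using cover_num_le_card[of "{H}" A] by auto
      qed
      then show ?thesis using C_le3_simple_if_cover_num_le_2 by simp
    qed
  qed
qed

theorem mainTheorem10:
  assumes "line_arrangement A"
    and "\<not> C_le3_simple A"
  shows "\<exists>H1\<in>A. \<exists>H2\<in>A. \<exists>H3\<in>A. \<exists>H4\<in>A. \<exists>H5\<in>A. \<exists>H6\<in>A.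
           distinct [H1, H2, H3, H4, H5, H6] \<and>
           H1 \<inter> H2 \<inter> H3 \<noteq> {} \<and> H4 \<inter> H5 \<inter> H6 \<noteq> {} \<and>
           finite ((H1 \<union> H2 \<union> H3) \<inter> (H4 \<union> H5 \<union> H6)) \<and>
           card ((H1 \<union> H2 \<union> H3) \<inter> (H4 \<union> H5 \<union> H6)) = 9"
proof -
  obtain P Q where "well_separated A P Q"
    using C_le3_simple_if_no_well_separated assms by blast
  then show ?thesis by (rule well_separated_nine_points[OF assms(1)])
qed

end
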